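(* Let $(\mathscr{A},\mathscr{E})$ and $(\mathscr{B},\mathscr{F})$ be exact categories (in the sense of Quillen) and let $L : \mathscr{A} \rightarrow \mathscr{B}$ be an exact functor. Suppose $\mathscr{F}' \subseteq \mathscr{F}$ is a subfamily of conflations such that $(\mathscr{B},\mathscr{F}')$ is again an exact category. Define $\mathscr{E}' = \{ s \in \mathscr{E} : Ls \in \mathscr{F}' \}$. Then $(\mathscr{A},\mathscr{E}')$ is an exact category.
   Context: An exact category $(\mathscr{A},\mathscr{E})$ is an additive category $\mathscr{A}$ together with a class $\mathscr{E}$ of kernel–cokernel pairs (short exact sequences, "conflations") $X \rightarrowtail Y \twoheadrightarrow Z$, closed under isomorphism, satisfying Quillen's axioms (equivalently Keller's minimal axioms: identity of $0$ is a deflation; composites of deflations are deflations; pullbacks of deflations along arbitrary morphisms exist and are deflations; dually pushouts of inflations exist and are inflations). An exact functor $L:(\mathscr{A},\mathscr{E})\to(\mathscr{B},\mathscr{F})$ is an additive functor sending sequences in $\mathscr{E}$ to sequences in $\mathscr{F}$. For $s\in\mathscr{E}$, $Ls$ denotes the image sequence. *)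

theory Defs
  imports Main
begin

text \<open>Additive categories encoded explicitly: objects of type 'o, morphisms of type 'm,
  with carrier sets, domain/codomain, identities, composition (Comp g f = g after f),
  addition of parallel morphisms and zero morphisms.\<close>

record ('o, 'm) addcat =
  Obj  :: "'o set"
  Mor  :: "'m set"
  Dom  :: "'m \<Rightarrow> 'o"
  Cod  :: "'m \<Rightarrow> 'o"
  Id   :: "'o \<Rightarrow> 'm"
  Comp :: "'m \<Rightarrow> 'm \<Rightarrow> 'm"
  Add  :: "'m \<Rightarrow> 'm \<Rightarrow> 'm"
  Zero :: "'o \<Rightarrow> 'o \<Rightarrow> 'm"

definition hom :: "('o, 'm) addcat \<Rightarrow> 'o \<Rightarrow> 'o \<Rightarrow> 'm set" where
  "hom C a b = {f \<in> Mor C. Dom C f = a \<and> Cod C f = b}"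

definition category :: "('o, 'm) addcat \<Rightarrow> bool" where
  "category C \<longleftrightarrow>
     (\<forall>f\<in>Mor C. Dom C f \<in> Obj C \<and> Cod C f \<in> Obj C) \<and>
     (\<forall>a\<in>Obj C. Id C a \<in> hom C a a) \<and>
     (\<forall>f\<in>Mor C. \<forall>g\<in>Mor C. Cod C f = Dom C g \<longrightarrow> Comp C g f \<in> hom C (Dom C f) (Cod C g)) \<and>
     (\<forall>f\<in>Mor C. Comp C f (Id C (Dom C f)) = f \<and> Comp C (Id C (Cod C f)) f = f) \<and>
     (\<forall>f\<in>Mor C. \<forall>g\<in>Mor C. \<forall>h\<in>Mor C. Cod C f = Dom C g \<longrightarrow> Cod C g = Dom C h \<longrightarrow>
        Comp C h (Comp C g f) = Comp C (Comp C h g) f)"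

definition preadditive :: "('o, 'm) addcat \<Rightarrow> bool" where
  "preadditive C \<longleftrightarrow> category C \<and>
     (\<forall>a\<in>Obj C. \<forall>b\<in>Obj C.
        Zero C a b \<in> hom C a b \<and>
        (\<forall>f\<in>hom C a b. \<forall>g\<in>hom C a b. Add C f g \<in> hom C a b) \<and>
        (\<forall>f\<in>hom C a b. \<forall>g\<in>hom C a b. Add C f g = Add C g f) \<and>
        (\<forall>f\<in>hom C a b. \<forall>g\<in>hom C a b. \<forall>h\<in>hom C a b. Add C (Add C f g) h = Add C f (Add C g h)) \<and>
        (\<forall>f\<in>hom C a b. Add C f (Zero C a b) = f) \<and>
        (\<forall>f\<in>hom C a b. \<exists>g\<in>hom C a b. Add C f g = Zero C a b)) \<and>
     (\<forall>a\<in>Obj C. \<forall>b\<in>Obj C. \<forall>c\<in>Obj C.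
        (\<forall>f\<in>hom C a b. \<forall>g\<in>hom C b c. \<forall>g'\<in>hom C b c.
            Comp C (Add C g g') f = Add C (Comp C g f) (Comp C g' f)) \<and>
        (\<forall>f\<in>hom C a b. \<forall>f'\<in>hom C a b. \<forall>g\<in>hom C b c.
            Comp C g (Add C f f') = Add C (Comp C g f) (Comp C g f')))"

definition additive :: "('o, 'm) addcat \<Rightarrow> bool" where
  "additive C \<longleftrightarrow> preadditive C \<and>
     (\<exists>z\<in>Obj C. \<forall>a\<in>Obj C. (\<exists>!f. f \<in> hom C z a) \<and> (\<exists>!f. f \<in> hom C a z)) \<and>
     (\<forall>a\<in>Obj C. \<forall>b\<in>Obj C. \<exists>p\<in>Obj C. \<exists>i1 i2 p1 p2.
        i1 \<in> hom C a p \<and> i2 \<in> hom C b p \<and> p1 \<in> hom C p a \<and> p2 \<in> hom C p b \<and>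
        Comp C p1 i1 = Id C a \<and> Comp C p2 i2 = Id C b \<and>
        Add C (Comp C i1 p1) (Comp C i2 p2) = Id C p)"

definition is_kernel :: "('o, 'm) addcat \<Rightarrow> 'm \<Rightarrow> 'm \<Rightarrow> bool" where
  "is_kernel C i d \<longleftrightarrow> i \<in> Mor C \<and> d \<in> Mor C \<and> Cod C i = Dom C d \<and>
     Comp C d i = Zero C (Dom C i) (Cod C d) \<and>
     (\<forall>w\<in>Obj C. \<forall>f\<in>hom C w (Dom C d). Comp C d f = Zero C w (Cod C d) \<longrightarrow>
        (\<exists>!g. g \<in> hom C w (Dom C i) \<and> Comp C i g = f))"

definition is_cokernel :: "('o, 'm) addcat \<Rightarrow> 'm \<Rightarrow> 'm \<Rightarrow> bool" where
  "is_cokernel C d i \<longleftrightarrow> i \<in> Mor C \<and> d \<in> Mor C \<and> Cod C i = Dom C d \<and>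
     Comp C d i = Zero C (Dom C i) (Cod C d) \<and>
     (\<forall>w\<in>Obj C. \<forall>f\<in>hom C (Cod C i) w. Comp C f i = Zero C (Dom C i) w \<longrightarrow>
        (\<exists>!g. g \<in> hom C (Cod C d) w \<and> Comp C g d = f))"

definition kc_pair :: "('o, 'm) addcat \<Rightarrow> 'm \<Rightarrow> 'm \<Rightarrow> bool" where
  "kc_pair C i d \<longleftrightarrow> is_kernel C i d \<and> is_cokernel C d i"

definition iso :: "('o, 'm) addcat \<Rightarrow> 'm \<Rightarrow> bool" where
  "iso C f \<longleftrightarrow> f \<in> Mor C \<and>
     (\<exists>g\<in>hom C (Cod C f) (Dom C f). Comp C g f = Id C (Dom C f) \<and> Comp C f g = Id C (Cod C f))"

text \<open>A conflation X >-> Y ->> Z is represented by the pair (inflation, deflation).\<close>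
definition inflation :: "('o, 'm) addcat \<Rightarrow> ('m \<times> 'm) set \<Rightarrow> 'm \<Rightarrow> bool" where
  "inflation C E i \<longleftrightarrow> (\<exists>d. (i, d) \<in> E)"

definition deflation :: "('o, 'm) addcat \<Rightarrow> ('m \<times> 'm) set \<Rightarrow> 'm \<Rightarrow> bool" where
  "deflation C E d \<longleftrightarrow> (\<exists>i. (i, d) \<in> E)"

text \<open>Pushout square:  i : A -> B, f : A -> A', i' : A' -> P, f' : B -> P.\<close>
definition is_pushout :: "('o, 'm) addcat \<Rightarrow> 'm \<Rightarrow> 'm \<Rightarrow> 'm \<Rightarrow> 'm \<Rightarrow> bool" where
  "is_pushout C i f i' f' \<longleftrightarrow> i \<in> Mor C \<and> f \<in> Mor C \<and> i' \<in> Mor C \<and> f' \<in> Mor C \<and>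
     Dom C i = Dom C f \<and> Dom C i' = Cod C f \<and> Dom C f' = Cod C i \<and> Cod C i' = Cod C f' \<and>
     Comp C i' f = Comp C f' i \<and>
     (\<forall>w\<in>Obj C. \<forall>x\<in>hom C (Cod C f) w. \<forall>y\<in>hom C (Cod C i) w.
        Comp C x f = Comp C y i \<longrightarrow>
        (\<exists>!u. u \<in> hom C (Cod C i') w \<and> Comp C u i' = x \<and> Comp C u f' = y))"

text \<open>Pullback square:  d : B -> C, f : C' -> C, d' : P -> C', f' : P -> B.\<close>
definition is_pullback :: "('o, 'm) addcat \<Rightarrow> 'm \<Rightarrow> 'm \<Rightarrow> 'm \<Rightarrow> 'm \<Rightarrow> bool" where
  "is_pullback C d f d' f' \<longleftrightarrow> d \<in> Mor C \<and> f \<in> Mor C \<and> d' \<in> Mor C \<and> f' \<in> Mor C \<and>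
     Cod C d = Cod C f \<and> Cod C d' = Dom C f \<and> Cod C f' = Dom C d \<and> Dom C d' = Dom C f' \<and>
     Comp C d f' = Comp C f d' \<and>
     (\<forall>w\<in>Obj C. \<forall>x\<in>hom C w (Dom C f). \<forall>y\<in>hom C w (Dom C d).
        Comp C f x = Comp C d y \<longrightarrow>
        (\<exists>!u. u \<in> hom C w (Dom C d') \<and> Comp C d' u = x \<and> Comp C f' u = y))"

text \<open>Exact category in the sense of Quillen (axioms as in Buehler, Exact categories, Def. 2.1).\<close>
definition exact_category :: "('o, 'm) addcat \<Rightarrow> ('m \<times> 'm) set \<Rightarrow> bool" where
  "exact_category C E \<longleftrightarrow> additive C \<and>
     (\<forall>(i, d)\<in>E. kc_pair C i d) \<and>
     \<comment> \<open>closed under isomorphisms of short exact sequences\<close>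
     (\<forall>(i, d)\<in>E. \<forall>i' d' f g h.
        i' \<in> Mor C \<and> d' \<in> Mor C \<and> Cod C i' = Dom C d' \<and>
        iso C f \<and> iso C g \<and> iso C h \<and>
        f \<in> hom C (Dom C i) (Dom C i') \<and> g \<in> hom C (Cod C i) (Cod C i') \<and>
        h \<in> hom C (Cod C d) (Cod C d') \<and>
        Comp C i' f = Comp C g i \<and> Comp C d' g = Comp C h d \<longrightarrow> (i', d') \<in> E) \<and>
     \<comment> \<open>E0, E0op\<close>
     (\<forall>a\<in>Obj C. deflation C E (Id C a)) \<and>
     (\<forall>a\<in>Obj C. inflation C E (Id C a)) \<and>
     \<comment> \<open>E1, E1op\<close>
     (\<forall>d d'. deflation C E d \<and> deflation C E d' \<and> Cod C d = Dom C d' \<longrightarrow>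
        deflation C E (Comp C d' d)) \<and>
     (\<forall>i i'. inflation C E i \<and> inflation C E i' \<and> Cod C i = Dom C i' \<longrightarrow>
        inflation C E (Comp C i' i)) \<and>
     \<comment> \<open>E2: pushouts of inflations along arbitrary morphisms exist and are inflations\<close>
     (\<forall>i f. inflation C E i \<and> f \<in> Mor C \<and> Dom C f = Dom C i \<longrightarrow>
        (\<exists>i' f'. is_pushout C i f i' f' \<and> inflation C E i')) \<and>
     \<comment> \<open>E2op: pullbacks of deflations along arbitrary morphisms exist and are deflations\<close>
     (\<forall>d f. deflation C E d \<and> f \<in> Mor C \<and> Cod C f = Cod C d \<longrightarrow>
        (\<exists>d' f'. is_pullback C d f d' f' \<and> deflation C E d'))"

definition additive_functor ::
  "('o, 'm) addcat \<Rightarrow> ('p, 'n) addcat \<Rightarrow> ('o \<Rightarrow> 'p) \<Rightarrow> ('m \<Rightarrow> 'n) \<Rightarrow> bool" where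
  "additive_functor C D LO LM \<longleftrightarrow>
     (\<forall>a\<in>Obj C. LO a \<in> Obj D \<and> LM (Id C a) = Id D (LO a)) \<and>
     (\<forall>f\<in>Mor C. LM f \<in> hom D (LO (Dom C f)) (LO (Cod C f))) \<and>
     (\<forall>f\<in>Mor C. \<forall>g\<in>Mor C. Cod C f = Dom C g \<longrightarrow> LM (Comp C g f) = Comp D (LM g) (LM f)) \<and>
     (\<forall>a\<in>Obj C. \<forall>b\<in>Obj C. \<forall>f\<in>hom C a b. \<forall>g\<in>hom C a b.
        LM (Add C f g) = Add D (LM f) (LM g))"

definition exact_functor ::
  "('o, 'm) addcat \<Rightarrow> ('m \<times> 'm) set \<Rightarrow> ('p, 'n) addcat \<Rightarrow> ('n \<times> 'n) set \<Rightarrow>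
   ('o \<Rightarrow> 'p) \<Rightarrow> ('m \<Rightarrow> 'n) \<Rightarrow> bool" where
  "exact_functor C E D F LO LM \<longleftrightarrow> additive_functor C D LO LM \<and>
     (\<forall>(i, d)\<in>E. (LM i, LM d) \<in> F)"

end

theory Submission
  imports Defs
begin

text \<open>
  Most axioms pass from \<open>E\<close> to \<open>E'\<close> at once: \<open>L\<close> maps \<open>E\<close> into \<open>F\<close>, and an
  \<open>F\<close>-conflation whose deflation (or inflation) is an \<open>F'\<close>-deflation (inflation) lies in \<open>F'\<close>,
  because kernels and cokernels are unique up to isomorphism and \<open>F'\<close> is closed under isomorphisms.
  The real work is in the pushout and pullback axioms. Pushing an \<open>E'\<close>-conflation out along \<open>f\<close>
  in \<open>A\<close> gives an \<open>E\<close>-conflation whose image is in \<open>F\<close>; pushing its image out along \<open>L f\<close> in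
  \<open>(B, F')\<close> gives an \<open>F'\<close>-conflation. The universal property yields a morphism between the two
  that is the identity on both end terms, hence an isomorphism by the short five lemma in \<open>(B, F)\<close>;
  so the image of the pushout lies in \<open>F'\<close>. Pullbacks are dual.
\<close>

section \<open>Preadditive categories\<close>

locale preadditive_cat =
  fixes C :: "('o, 'm) addcat"
  assumes preadditive: "preadditive C"
begin

abbreviation cmp (infixl "\<cdot>" 70) where "g \<cdot> f \<equiv> Comp C g f"
abbreviation madd (infixl "\<oplus>" 65) where "f \<oplus> g \<equiv> Add C f g"
abbreviation "Z \<equiv> Zero C"
abbreviation "I \<equiv> Id C"

lemma hom_iff: "f \<in> hom C a b \<longleftrightarrow> f \<in> Mor C \<and> Dom C f = a \<and> Cod C f = b"
  unfolding hom_def by auto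

lemma category: "category C"
  using preadditive unfolding preadditive_def by blast

lemma dom_obj [simp]: "f \<in> Mor C \<Longrightarrow> Dom C f \<in> Obj C"
  and cod_obj [simp]: "f \<in> Mor C \<Longrightarrow> Cod C f \<in> Obj C"
  using category unfolding category_def by auto

lemma comp_mor [simp]: "f \<in> Mor C \<Longrightarrow> g \<in> Mor C \<Longrightarrow> Cod C f = Dom C g \<Longrightarrow> g \<cdot> f \<in> Mor C"
  and dom_comp [simp]: "f \<in> Mor C \<Longrightarrow> g \<in> Mor C \<Longrightarrow> Cod C f = Dom C g \<Longrightarrow> Dom C (g \<cdot> f) = Dom C f"
  and cod_comp [simp]: "f \<in> Mor C \<Longrightarrow> g \<in> Mor C \<Longrightarrow> Cod C f = Dom C g \<Longrightarrow> Cod C (g \<cdot> f) = Cod C g"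
  using category unfolding category_def hom_iff by auto

lemma comp_assoc:
  "f \<in> Mor C \<Longrightarrow> g \<in> Mor C \<Longrightarrow> h \<in> Mor C \<Longrightarrow> Cod C f = Dom C g \<Longrightarrow> Cod C g = Dom C h \<Longrightarrow>
   (h \<cdot> g) \<cdot> f = h \<cdot> (g \<cdot> f)"
  using category unfolding category_def by metis

lemma id_mor [simp]: "a \<in> Obj C \<Longrightarrow> I a \<in> Mor C"
  and dom_id [simp]: "a \<in> Obj C \<Longrightarrow> Dom C (I a) = a"
  and cod_id [simp]: "a \<in> Obj C \<Longrightarrow> Cod C (I a) = a"
  using category unfolding category_def hom_iff by auto

lemma comp_id_left [simp]: "f \<in> Mor C \<Longrightarrow> Cod C f = b \<Longrightarrow> I b \<cdot> f = f"
  and comp_id_right [simp]: "f \<in> Mor C \<Longrightarrow> Dom C f = a \<Longrightarrow> f \<cdot> I a = f"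
  using category unfolding category_def by auto

lemma zero_hom: "a \<in> Obj C \<Longrightarrow> b \<in> Obj C \<Longrightarrow> Z a b \<in> hom C a b"
  using preadditive unfolding preadditive_def by auto

lemma zero_mor [simp]: "a \<in> Obj C \<Longrightarrow> b \<in> Obj C \<Longrightarrow> Z a b \<in> Mor C"
  and dom_zero [simp]: "a \<in> Obj C \<Longrightarrow> b \<in> Obj C \<Longrightarrow> Dom C (Z a b) = a"
  and cod_zero [simp]: "a \<in> Obj C \<Longrightarrow> b \<in> Obj C \<Longrightarrow> Cod C (Z a b) = b"
  using zero_hom unfolding hom_iff by auto

lemma hom_obj: "f \<in> hom C a b \<Longrightarrow> a \<in> Obj C \<and> b \<in> Obj C"
  unfolding hom_iff by auto

lemma add_hom: "f \<in> hom C a b \<Longrightarrow> g \<in> hom C a b \<Longrightarrow> f \<oplus> g \<in> hom C a b"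
  using preadditive hom_obj unfolding preadditive_def by blast

lemma add_hom_commute: "f \<in> hom C a b \<Longrightarrow> g \<in> hom C a b \<Longrightarrow> f \<oplus> g = g \<oplus> f"
  using preadditive hom_obj unfolding preadditive_def by blast

lemma add_hom_assoc:
  "f \<in> hom C a b \<Longrightarrow> g \<in> hom C a b \<Longrightarrow> h \<in> hom C a b \<Longrightarrow> (f \<oplus> g) \<oplus> h = f \<oplus> (g \<oplus> h)"
  using preadditive hom_obj unfolding preadditive_def by blast

lemma add_hom_zero: "f \<in> hom C a b \<Longrightarrow> f \<oplus> Z a b = f"
  using preadditive hom_obj unfolding preadditive_def by blast

lemma add_hom_inverse: "f \<in> hom C a b \<Longrightarrow> \<exists>g\<in>hom C a b. f \<oplus> g = Z a b"
  using preadditive hom_obj unfolding preadditive_def by blast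

lemma comp_add_hom_left:
  "f \<in> hom C a b \<Longrightarrow> g \<in> hom C b c \<Longrightarrow> g' \<in> hom C b c \<Longrightarrow> (g \<oplus> g') \<cdot> f = g \<cdot> f \<oplus> g' \<cdot> f"
  using preadditive hom_obj unfolding preadditive_def by blast

lemma comp_add_hom_right:
  "f \<in> hom C a b \<Longrightarrow> f' \<in> hom C a b \<Longrightarrow> g \<in> hom C b c \<Longrightarrow> g \<cdot> (f \<oplus> f') = g \<cdot> f \<oplus> g \<cdot> f'"
  using preadditive hom_obj unfolding preadditive_def by blast

lemma add_mor [simp]:
    "f \<in> Mor C \<Longrightarrow> g \<in> Mor C \<Longrightarrow> Dom C g = Dom C f \<Longrightarrow> Cod C g = Cod C f \<Longrightarrow> f \<oplus> g \<in> Mor C"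
  and dom_add [simp]:
    "f \<in> Mor C \<Longrightarrow> g \<in> Mor C \<Longrightarrow> Dom C g = Dom C f \<Longrightarrow> Cod C g = Cod C f \<Longrightarrow> Dom C (f \<oplus> g) = Dom C f"
  and cod_add [simp]:
    "f \<in> Mor C \<Longrightarrow> g \<in> Mor C \<Longrightarrow> Dom C g = Dom C f \<Longrightarrow> Cod C g = Cod C f \<Longrightarrow> Cod C (f \<oplus> g) = Cod C f"
  using add_hom[of f "Dom C f" "Cod C f" g] unfolding hom_iff by auto

lemma add_commute:
  "f \<in> Mor C \<Longrightarrow> g \<in> Mor C \<Longrightarrow> Dom C g = Dom C f \<Longrightarrow> Cod C g = Cod C f \<Longrightarrow> f \<oplus> g = g \<oplus> f"
  using add_hom_commute[of f "Dom C f" "Cod C f" g] unfolding hom_iff by auto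

lemma add_assoc:
  "f \<in> Mor C \<Longrightarrow> g \<in> Mor C \<Longrightarrow> h \<in> Mor C \<Longrightarrow> Dom C g = Dom C f \<Longrightarrow> Cod C g = Cod C f \<Longrightarrow>
   Dom C h = Dom C f \<Longrightarrow> Cod C h = Cod C f \<Longrightarrow> (f \<oplus> g) \<oplus> h = f \<oplus> (g \<oplus> h)"
  using add_hom_assoc[of f "Dom C f" "Cod C f" g h] unfolding hom_iff by auto

lemma add_zero_right [simp]: "f \<in> Mor C \<Longrightarrow> Dom C f = a \<Longrightarrow> Cod C f = b \<Longrightarrow> f \<oplus> Z a b = f"
  using add_hom_zero[of f a b] unfolding hom_iff by auto

lemma add_zero_left [simp]: "f \<in> Mor C \<Longrightarrow> Dom C f = a \<Longrightarrow> Cod C f = b \<Longrightarrow> Z a b \<oplus> f = f"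
proof -
  assume f: "f \<in> Mor C" "Dom C f = a" "Cod C f = b"
  then have "Z a b \<oplus> f = f \<oplus> Z a b" using add_commute[of "Z a b" f] by auto
  with f show ?thesis by simp
qed

lemma comp_add_left:
  "h \<in> Mor C \<Longrightarrow> f \<in> Mor C \<Longrightarrow> g \<in> Mor C \<Longrightarrow> Cod C h = Dom C f \<Longrightarrow> Dom C g = Dom C f \<Longrightarrow>
   Cod C g = Cod C f \<Longrightarrow> (f \<oplus> g) \<cdot> h = f \<cdot> h \<oplus> g \<cdot> h"
  using comp_add_hom_left[of h "Dom C h" "Dom C f" f "Cod C f" g] unfolding hom_iff by simp

lemma comp_add_right:
  "f \<in> Mor C \<Longrightarrow> g \<in> Mor C \<Longrightarrow> h \<in> Mor C \<Longrightarrow> Dom C h = Cod C f \<Longrightarrow> Dom C g = Dom C f \<Longrightarrow>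
   Cod C g = Cod C f \<Longrightarrow> h \<cdot> (f \<oplus> g) = h \<cdot> f \<oplus> h \<cdot> g"
  using comp_add_hom_right[of f "Dom C f" "Cod C f" g h "Cod C h"] unfolding hom_iff by simp

definition neg :: "'m \<Rightarrow> 'm" where
  "neg f = (SOME g. g \<in> hom C (Dom C f) (Cod C f) \<and> f \<oplus> g = Z (Dom C f) (Cod C f))"

lemma neg_hom: "f \<in> Mor C \<Longrightarrow> neg f \<in> hom C (Dom C f) (Cod C f) \<and> f \<oplus> neg f = Z (Dom C f) (Cod C f)"
  unfolding neg_def using add_hom_inverse[of f "Dom C f" "Cod C f"] by (rule someI2_bex) (simp add: hom_iff)

lemma neg_mor [simp]: "f \<in> Mor C \<Longrightarrow> neg f \<in> Mor C"
  and dom_neg [simp]: "f \<in> Mor C \<Longrightarrow> Dom C (neg f) = Dom C f"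
  and cod_neg [simp]: "f \<in> Mor C \<Longrightarrow> Cod C (neg f) = Cod C f"
  and add_neg_right [simp]: "f \<in> Mor C \<Longrightarrow> f \<oplus> neg f = Z (Dom C f) (Cod C f)"
  using neg_hom unfolding hom_iff by auto

lemma add_neg_left [simp]: "f \<in> Mor C \<Longrightarrow> neg f \<oplus> f = Z (Dom C f) (Cod C f)"
proof -
  assume f: "f \<in> Mor C"
  have "neg f \<oplus> f = f \<oplus> neg f" using f add_commute[of "neg f" f] by simp
  also have "\<dots> = Z (Dom C f) (Cod C f)" using f by simp
  finally show ?thesis .
qed

lemma neg_unique:
  assumes f: "f \<in> Mor C" and g: "g \<in> Mor C" "Dom C g = Dom C f" "Cod C g = Cod C f"
    and sum: "f \<oplus> g = Z (Dom C f) (Cod C f)"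
  shows "g = neg f"
proof -
  have "g = (neg f \<oplus> f) \<oplus> g" using f g by simp
  also have "\<dots> = neg f \<oplus> (f \<oplus> g)" using f g by - (rule add_assoc, simp_all)
  also have "\<dots> = neg f" using f sum by simp
  finally show ?thesis .
qed

lemma idempotent_is_zero:
  assumes "f \<in> Mor C" "f \<oplus> f = f"
  shows "f = Z (Dom C f) (Cod C f)"
proof -
  have "f = (neg f \<oplus> f) \<oplus> f" using assms by simp
  also have "\<dots> = neg f \<oplus> (f \<oplus> f)" using assms by - (rule add_assoc, simp_all)
  also have "\<dots> = Z (Dom C f) (Cod C f)" using assms by simp
  finally show ?thesis .
qed

lemma comp_zero_right [simp]:
  assumes "g \<in> Mor C" "Dom C g = b" "a \<in> Obj C"
  shows "g \<cdot> Z a b = Z a (Cod C g)"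
proof -
  have "b \<in> Obj C" using assms by auto
  then have "g \<cdot> Z a b \<oplus> g \<cdot> Z a b = g \<cdot> (Z a b \<oplus> Z a b)"
    using assms comp_add_right[of "Z a b" "Z a b" g] by simp
  then have "g \<cdot> Z a b = Z (Dom C (g \<cdot> Z a b)) (Cod C (g \<cdot> Z a b))"
    using assms \<open>b \<in> Obj C\<close> by - (rule idempotent_is_zero, simp_all)
  also have "\<dots> = Z a (Cod C g)" using assms \<open>b \<in> Obj C\<close> by simp
  finally show ?thesis .
qed

lemma comp_zero_left [simp]:
  assumes "f \<in> Mor C" "Cod C f = b" "c \<in> Obj C"
  shows "Z b c \<cdot> f = Z (Dom C f) c"
proof -
  have "b \<in> Obj C" using assms by auto
  then have "Z b c \<cdot> f \<oplus> Z b c \<cdot> f = (Z b c \<oplus> Z b c) \<cdot> f"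
    using assms comp_add_left[of f "Z b c" "Z b c"] by simp
  then have "Z b c \<cdot> f = Z (Dom C (Z b c \<cdot> f)) (Cod C (Z b c \<cdot> f))"
    using assms \<open>b \<in> Obj C\<close> by - (rule idempotent_is_zero, simp_all)
  also have "\<dots> = Z (Dom C f) c" using assms \<open>b \<in> Obj C\<close> by simp
  finally show ?thesis .
qed

lemma comp_neg_right [simp]:
  assumes "f \<in> Mor C" "g \<in> Mor C" "Cod C f = Dom C g"
  shows "g \<cdot> neg f = neg (g \<cdot> f)"
proof (rule neg_unique)
  show "g \<cdot> f \<oplus> g \<cdot> neg f = Z (Dom C (g \<cdot> f)) (Cod C (g \<cdot> f))"
    using assms comp_add_right[of f "neg f" g] by simp
qed (use assms in simp_all)

lemma comp_neg_left [simp]: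
  assumes "f \<in> Mor C" "g \<in> Mor C" "Cod C f = Dom C g"
  shows "neg g \<cdot> f = neg (g \<cdot> f)"
proof (rule neg_unique)
  show "g \<cdot> f \<oplus> neg g \<cdot> f = Z (Dom C (g \<cdot> f)) (Cod C (g \<cdot> f))"
    using assms comp_add_left[of f g "neg g"] by simp
qed (use assms in simp_all)

lemma kernelD:
  assumes "is_kernel C i d"
  shows "i \<in> Mor C" "d \<in> Mor C" "Cod C i = Dom C d" "d \<cdot> i = Z (Dom C i) (Cod C d)"
  using assms unfolding is_kernel_def by auto

lemma kernel_unique_factor:
  assumes k: "is_kernel C i d" and f: "f \<in> Mor C" "Cod C f = Dom C d" "d \<cdot> f = Z (Dom C f) (Cod C d)"
  shows "\<exists>!g. g \<in> hom C (Dom C f) (Dom C i) \<and> i \<cdot> g = f"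
proof -
  have univ: "\<forall>w\<in>Obj C. \<forall>f\<in>hom C w (Dom C d). d \<cdot> f = Z w (Cod C d) \<longrightarrow>
      (\<exists>!g. g \<in> hom C w (Dom C i) \<and> i \<cdot> g = f)"
    using k unfolding is_kernel_def by (elim conjE)
  have "f \<in> hom C (Dom C f) (Dom C d)" using f by (simp add: hom_iff)
  then show ?thesis using univ f by simp
qed

lemma kernel_factor:
  assumes "is_kernel C i d" "f \<in> Mor C" "Cod C f = Dom C d" "d \<cdot> f = Z (Dom C f) (Cod C d)"
  shows "\<exists>g. g \<in> Mor C \<and> Dom C g = Dom C f \<and> Cod C g = Dom C i \<and> i \<cdot> g = f"
  using kernel_unique_factor[OF assms] unfolding hom_iff by auto

lemma kernel_cancel:
  assumes k: "is_kernel C i d" and xy: "x \<in> Mor C" "y \<in> Mor C" "Dom C y = Dom C x"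
    "Cod C x = Dom C i" "Cod C y = Dom C i" and eq: "i \<cdot> x = i \<cdot> y"
  shows "x = y"
proof -
  note i = kernelD[OF k]
  have "d \<cdot> (i \<cdot> x) = (d \<cdot> i) \<cdot> x"
    using i xy by - (rule comp_assoc[symmetric], auto)
  also have "\<dots> = Z (Dom C (i \<cdot> x)) (Cod C d)"
    using i xy by simp
  finally have "\<exists>!g. g \<in> hom C (Dom C (i \<cdot> x)) (Dom C i) \<and> i \<cdot> g = i \<cdot> x"
    using i xy by - (rule kernel_unique_factor[OF k], simp_all)
  then obtain g where g: "\<forall>g'. g' \<in> hom C (Dom C (i \<cdot> x)) (Dom C i) \<and> i \<cdot> g' = i \<cdot> x \<longrightarrow> g' = g"
    by (rule ex1E) blast
  have "x \<in> hom C (Dom C (i \<cdot> x)) (Dom C i)" "y \<in> hom C (Dom C (i \<cdot> x)) (Dom C i)"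
    using i xy by (simp_all add: hom_iff)
  then show ?thesis using g eq by metis
qed

lemma is_kernelI:
  assumes i: "i \<in> Mor C" "d \<in> Mor C" "Cod C i = Dom C d" "d \<cdot> i = Z (Dom C i) (Cod C d)"
    and factor: "\<And>f. f \<in> Mor C \<Longrightarrow> Cod C f = Dom C d \<Longrightarrow> d \<cdot> f = Z (Dom C f) (Cod C d) \<Longrightarrow>
      \<exists>g. g \<in> Mor C \<and> Dom C g = Dom C f \<and> Cod C g = Dom C i \<and> i \<cdot> g = f"
    and cancel: "\<And>x y. x \<in> Mor C \<Longrightarrow> y \<in> Mor C \<Longrightarrow> Dom C y = Dom C x \<Longrightarrow>
      Cod C x = Dom C i \<Longrightarrow> Cod C y = Dom C i \<Longrightarrow> i \<cdot> x = i \<cdot> y \<Longrightarrow> x = y"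
  shows "is_kernel C i d"
  unfolding is_kernel_def
proof (intro conjI ballI impI)
  fix w f assume f: "f \<in> hom C w (Dom C d)" "d \<cdot> f = Z w (Cod C d)"
  then have "f \<in> Mor C" "Cod C f = Dom C d" "d \<cdot> f = Z (Dom C f) (Cod C d)" "Dom C f = w"
    by (simp_all add: hom_iff)
  then obtain g where g: "g \<in> Mor C" "Dom C g = w" "Cod C g = Dom C i" "i \<cdot> g = f"
    using factor by blast
  show "\<exists>!g. g \<in> hom C w (Dom C i) \<and> i \<cdot> g = f"
  proof (rule ex1I)
    show "g \<in> hom C w (Dom C i) \<and> i \<cdot> g = f" using g by (simp add: hom_iff)
  next
    fix g' assume "g' \<in> hom C w (Dom C i) \<and> i \<cdot> g' = f"
    with g show "g' = g" by - (rule cancel, simp_all add: hom_iff)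
  qed
qed (fact assms)+

lemma cokernelD:
  assumes "is_cokernel C d i"
  shows "i \<in> Mor C" "d \<in> Mor C" "Cod C i = Dom C d" "d \<cdot> i = Z (Dom C i) (Cod C d)"
  using assms unfolding is_cokernel_def by auto

lemma cokernel_unique_factor:
  assumes c: "is_cokernel C d i" and f: "f \<in> Mor C" "Dom C f = Cod C i" "f \<cdot> i = Z (Dom C i) (Cod C f)"
  shows "\<exists>!g. g \<in> hom C (Cod C d) (Cod C f) \<and> g \<cdot> d = f"
proof -
  have univ: "\<forall>w\<in>Obj C. \<forall>f\<in>hom C (Cod C i) w. f \<cdot> i = Z (Dom C i) w \<longrightarrow>
      (\<exists>!g. g \<in> hom C (Cod C d) w \<and> g \<cdot> d = f)"
    using c unfolding is_cokernel_def by (elim conjE)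
  have "f \<in> hom C (Cod C i) (Cod C f)" using f by (simp add: hom_iff)
  then show ?thesis using univ f by simp
qed

lemma cokernel_factor:
  assumes "is_cokernel C d i" "f \<in> Mor C" "Dom C f = Cod C i" "f \<cdot> i = Z (Dom C i) (Cod C f)"
  shows "\<exists>g. g \<in> Mor C \<and> Dom C g = Cod C d \<and> Cod C g = Cod C f \<and> g \<cdot> d = f"
  using cokernel_unique_factor[OF assms] unfolding hom_iff by auto

lemma cokernel_cancel:
  assumes c: "is_cokernel C d i" and xy: "x \<in> Mor C" "y \<in> Mor C" "Cod C y = Cod C x"
    "Dom C x = Cod C d" "Dom C y = Cod C d" and eq: "x \<cdot> d = y \<cdot> d"
  shows "x = y"
proof -
  note d = cokernelD[OF c]
  have "(x \<cdot> d) \<cdot> i = x \<cdot> (d \<cdot> i)"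
    using d xy by - (rule comp_assoc, auto)
  also have "\<dots> = Z (Dom C i) (Cod C (x \<cdot> d))"
    using d xy by simp
  finally have "\<exists>!g. g \<in> hom C (Cod C d) (Cod C (x \<cdot> d)) \<and> g \<cdot> d = x \<cdot> d"
    using d xy by - (rule cokernel_unique_factor[OF c], simp_all)
  then obtain g where g: "\<forall>g'. g' \<in> hom C (Cod C d) (Cod C (x \<cdot> d)) \<and> g' \<cdot> d = x \<cdot> d \<longrightarrow> g' = g"
    by (rule ex1E) blast
  have "x \<in> hom C (Cod C d) (Cod C (x \<cdot> d))" "y \<in> hom C (Cod C d) (Cod C (x \<cdot> d))"
    using d xy by (simp_all add: hom_iff)
  then show ?thesis using g eq by metis
qed

lemma is_cokernelI:
  assumes d: "i \<in> Mor C" "d \<in> Mor C" "Cod C i = Dom C d" "d \<cdot> i = Z (Dom C i) (Cod C d)"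
    and factor: "\<And>f. f \<in> Mor C \<Longrightarrow> Dom C f = Cod C i \<Longrightarrow> f \<cdot> i = Z (Dom C i) (Cod C f) \<Longrightarrow>
      \<exists>g. g \<in> Mor C \<and> Dom C g = Cod C d \<and> Cod C g = Cod C f \<and> g \<cdot> d = f"
    and cancel: "\<And>x y. x \<in> Mor C \<Longrightarrow> y \<in> Mor C \<Longrightarrow> Cod C y = Cod C x \<Longrightarrow>
      Dom C x = Cod C d \<Longrightarrow> Dom C y = Cod C d \<Longrightarrow> x \<cdot> d = y \<cdot> d \<Longrightarrow> x = y"
  shows "is_cokernel C d i"
  unfolding is_cokernel_def
proof (intro conjI ballI impI)
  fix w f assume f: "f \<in> hom C (Cod C i) w" "f \<cdot> i = Z (Dom C i) w"
  then have "f \<in> Mor C" "Dom C f = Cod C i" "f \<cdot> i = Z (Dom C i) (Cod C f)" "Cod C f = w"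
    by (simp_all add: hom_iff)
  then obtain g where g: "g \<in> Mor C" "Dom C g = Cod C d" "Cod C g = w" "g \<cdot> d = f"
    using factor by blast
  show "\<exists>!g. g \<in> hom C (Cod C d) w \<and> g \<cdot> d = f"
  proof (rule ex1I)
    show "g \<in> hom C (Cod C d) w \<and> g \<cdot> d = f" using g by (simp add: hom_iff)
  next
    fix g' assume "g' \<in> hom C (Cod C d) w \<and> g' \<cdot> d = f"
    with g show "g' = g" by - (rule cancel, simp_all add: hom_iff)
  qed
qed (fact assms)+

lemma pushoutD:
  assumes "is_pushout C i f i' f'"
  shows "i \<in> Mor C" "f \<in> Mor C" "i' \<in> Mor C" "f' \<in> Mor C" "Dom C f = Dom C i"
    "Dom C i' = Cod C f" "Dom C f' = Cod C i" "Cod C f' = Cod C i'" "i' \<cdot> f = f' \<cdot> i"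
  using assms unfolding is_pushout_def by auto

lemma pushout_unique_factor:
  assumes po: "is_pushout C i f i' f'" and xy: "x \<in> Mor C" "y \<in> Mor C" "Dom C x = Cod C f"
    "Dom C y = Cod C i" "Cod C y = Cod C x" "x \<cdot> f = y \<cdot> i"
  shows "\<exists>!u. u \<in> hom C (Cod C i') (Cod C x) \<and> u \<cdot> i' = x \<and> u \<cdot> f' = y"
proof -
  have univ: "\<forall>w\<in>Obj C. \<forall>x\<in>hom C (Cod C f) w. \<forall>y\<in>hom C (Cod C i) w. x \<cdot> f = y \<cdot> i \<longrightarrow>
      (\<exists>!u. u \<in> hom C (Cod C i') w \<and> u \<cdot> i' = x \<and> u \<cdot> f' = y)"
    using po unfolding is_pushout_def by (elim conjE)
  have "x \<in> hom C (Cod C f) (Cod C x)" "y \<in> hom C (Cod C i) (Cod C x)"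
    using xy by (simp_all add: hom_iff)
  then show ?thesis using univ xy by simp
qed

lemma pushout_factor:
  assumes "is_pushout C i f i' f'" "x \<in> Mor C" "y \<in> Mor C" "Dom C x = Cod C f"
    "Dom C y = Cod C i" "Cod C y = Cod C x" "x \<cdot> f = y \<cdot> i"
  shows "\<exists>u. u \<in> Mor C \<and> Dom C u = Cod C i' \<and> Cod C u = Cod C x \<and> u \<cdot> i' = x \<and> u \<cdot> f' = y"
  using pushout_unique_factor[OF assms] unfolding hom_iff by auto

lemma pushout_cancel:
  assumes po: "is_pushout C i f i' f'" and uv: "u \<in> Mor C" "v \<in> Mor C" "Dom C u = Cod C i'"
    "Dom C v = Cod C i'" "Cod C v = Cod C u" and eq: "u \<cdot> i' = v \<cdot> i'" "u \<cdot> f' = v \<cdot> f'"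
  shows "u = v"
proof -
  note p = pushoutD[OF po]
  have "(u \<cdot> i') \<cdot> f = u \<cdot> (f' \<cdot> i)"
    using p uv by (simp add: comp_assoc)
  also have "\<dots> = (u \<cdot> f') \<cdot> i"
    using p uv by - (rule comp_assoc[symmetric], auto)
  finally have "\<exists>!w. w \<in> hom C (Cod C i') (Cod C (u \<cdot> i')) \<and> w \<cdot> i' = u \<cdot> i' \<and> w \<cdot> f' = u \<cdot> f'"
    using p uv by - (rule pushout_unique_factor[OF po], simp_all)
  then obtain w where w: "\<forall>w'. w' \<in> hom C (Cod C i') (Cod C (u \<cdot> i')) \<and> w' \<cdot> i' = u \<cdot> i' \<and>
      w' \<cdot> f' = u \<cdot> f' \<longrightarrow> w' = w"
    by (rule ex1E) blast
  have "u \<in> hom C (Cod C i') (Cod C (u \<cdot> i'))" "v \<in> hom C (Cod C i') (Cod C (u \<cdot> i'))"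
    using p uv by (simp_all add: hom_iff)
  then show ?thesis using w eq by metis
qed

lemma pullbackD:
  assumes "is_pullback C d f d' f'"
  shows "d \<in> Mor C" "f \<in> Mor C" "d' \<in> Mor C" "f' \<in> Mor C" "Cod C f = Cod C d"
    "Cod C d' = Dom C f" "Cod C f' = Dom C d" "Dom C f' = Dom C d'" "d \<cdot> f' = f \<cdot> d'"
  using assms unfolding is_pullback_def by auto

lemma pullback_unique_factor:
  assumes pb: "is_pullback C d f d' f'" and xy: "x \<in> Mor C" "y \<in> Mor C" "Cod C x = Dom C f"
    "Cod C y = Dom C d" "Dom C y = Dom C x" "f \<cdot> x = d \<cdot> y"
  shows "\<exists>!u. u \<in> hom C (Dom C x) (Dom C d') \<and> d' \<cdot> u = x \<and> f' \<cdot> u = y"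
proof -
  have univ: "\<forall>w\<in>Obj C. \<forall>x\<in>hom C w (Dom C f). \<forall>y\<in>hom C w (Dom C d). f \<cdot> x = d \<cdot> y \<longrightarrow>
      (\<exists>!u. u \<in> hom C w (Dom C d') \<and> d' \<cdot> u = x \<and> f' \<cdot> u = y)"
    using pb unfolding is_pullback_def by (elim conjE)
  have "x \<in> hom C (Dom C x) (Dom C f)" "y \<in> hom C (Dom C x) (Dom C d)"
    using xy by (simp_all add: hom_iff)
  then show ?thesis using univ xy by simp
qed

lemma pullback_factor:
  assumes "is_pullback C d f d' f'" "x \<in> Mor C" "y \<in> Mor C" "Cod C x = Dom C f"
    "Cod C y = Dom C d" "Dom C y = Dom C x" "f \<cdot> x = d \<cdot> y"
  shows "\<exists>u. u \<in> Mor C \<and> Dom C u = Dom C x \<and> Cod C u = Dom C d' \<and> d' \<cdot> u = x \<and> f' \<cdot> u = y"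
  using pullback_unique_factor[OF assms] unfolding hom_iff by auto

lemma pullback_cancel:
  assumes pb: "is_pullback C d f d' f'" and uv: "u \<in> Mor C" "v \<in> Mor C" "Cod C u = Dom C d'"
    "Cod C v = Dom C d'" "Dom C v = Dom C u" and eq: "d' \<cdot> u = d' \<cdot> v" "f' \<cdot> u = f' \<cdot> v"
  shows "u = v"
proof -
  note p = pullbackD[OF pb]
  have "f \<cdot> (d' \<cdot> u) = (f \<cdot> d') \<cdot> u"
    using p uv by - (rule comp_assoc[symmetric], auto)
  also have "\<dots> = (d \<cdot> f') \<cdot> u"
    using p by simp
  also have "\<dots> = d \<cdot> (f' \<cdot> u)"
    using p uv by - (rule comp_assoc, auto)
  finally have "\<exists>!w. w \<in> hom C (Dom C (d' \<cdot> u)) (Dom C d') \<and> d' \<cdot> w = d' \<cdot> u \<and> f' \<cdot> w = f' \<cdot> u"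
    using p uv by - (rule pullback_unique_factor[OF pb], simp_all)
  then obtain w where w: "\<forall>w'. w' \<in> hom C (Dom C (d' \<cdot> u)) (Dom C d') \<and> d' \<cdot> w' = d' \<cdot> u \<and>
      f' \<cdot> w' = f' \<cdot> u \<longrightarrow> w' = w"
    by (rule ex1E) blast
  have "u \<in> hom C (Dom C (d' \<cdot> u)) (Dom C d')" "v \<in> hom C (Dom C (d' \<cdot> u)) (Dom C d')"
    using p uv by (simp_all add: hom_iff)
  then show ?thesis using w eq by metis
qed

lemma pushout_cokernel:
  assumes po: "is_pushout C i f i' f'" and ck: "is_cokernel C d i"
  shows "\<exists>d'. d' \<in> Mor C \<and> Dom C d' = Cod C i' \<and> Cod C d' = Cod C d \<and> d' \<cdot> f' = d \<and> is_cokernel C d' i'"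
proof -
  note p = pushoutD[OF po] and c = cokernelD[OF ck]
  have "Z (Cod C f) (Cod C d) \<cdot> f = d \<cdot> i" using p c by simp
  then obtain d' where d': "d' \<in> Mor C" "Dom C d' = Cod C i'" "Cod C d' = Cod C d"
      "d' \<cdot> i' = Z (Cod C f) (Cod C d)" "d' \<cdot> f' = d"
    using pushout_factor[OF po, of "Z (Cod C f) (Cod C d)" d] p c by auto
  have "is_cokernel C d' i'"
  proof (rule is_cokernelI)
    fix x assume x: "x \<in> Mor C" "Dom C x = Cod C i'" "x \<cdot> i' = Z (Dom C i') (Cod C x)"
    have "(x \<cdot> f') \<cdot> i = x \<cdot> (i' \<cdot> f)" using p x by (simp add: comp_assoc)
    also have "\<dots> = (x \<cdot> i') \<cdot> f" using p x by - (rule comp_assoc[symmetric], auto)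
    also have "\<dots> = Z (Dom C i) (Cod C (x \<cdot> f'))" using p x by simp
    finally obtain v where v: "v \<in> Mor C" "Dom C v = Cod C d" "Cod C v = Cod C x" "v \<cdot> d = x \<cdot> f'"
      using cokernel_factor[OF ck, of "x \<cdot> f'"] p x by auto
    have "v \<cdot> d' = x"
    proof (rule pushout_cancel[OF po])
      show "(v \<cdot> d') \<cdot> i' = x \<cdot> i'" using p d' v x by (simp add: comp_assoc)
      show "(v \<cdot> d') \<cdot> f' = x \<cdot> f'" using p d' v x by (simp add: comp_assoc)
    qed (use p d' v x in simp_all)
    then show "\<exists>g. g \<in> Mor C \<and> Dom C g = Cod C d' \<and> Cod C g = Cod C x \<and> g \<cdot> d' = x"
      using v d' by auto
  next
    fix x y assume xy: "x \<in> Mor C" "y \<in> Mor C" "Cod C y = Cod C x" "Dom C x = Cod C d'"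
      "Dom C y = Cod C d'" "x \<cdot> d' = y \<cdot> d'"
    have "(x \<cdot> d') \<cdot> f' = (y \<cdot> d') \<cdot> f'" using xy by simp
    then have "x \<cdot> d = y \<cdot> d" using p d' xy(1-5) by (simp add: comp_assoc)
    with xy d' show "x = y" using cokernel_cancel[OF ck, of x y] by simp
  qed (use p d' in simp_all)
  then show ?thesis using d' by blast
qed

lemma pullback_kernel:
  assumes pb: "is_pullback C d f d' f'" and k: "is_kernel C i d"
  shows "\<exists>i'. i' \<in> Mor C \<and> Cod C i' = Dom C d' \<and> Dom C i' = Dom C i \<and> f' \<cdot> i' = i \<and> is_kernel C i' d'"
proof -
  note p = pullbackD[OF pb] and c = kernelD[OF k]
  have "f \<cdot> Z (Dom C i) (Dom C f) = d \<cdot> i" using p c by simp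
  then obtain i' where i': "i' \<in> Mor C" "Dom C i' = Dom C i" "Cod C i' = Dom C d'"
      "d' \<cdot> i' = Z (Dom C i) (Dom C f)" "f' \<cdot> i' = i"
    using pullback_factor[OF pb, of "Z (Dom C i) (Dom C f)" i] p c by auto
  have "is_kernel C i' d'"
  proof (rule is_kernelI)
    fix x assume x: "x \<in> Mor C" "Cod C x = Dom C d'" "d' \<cdot> x = Z (Dom C x) (Cod C d')"
    have "d \<cdot> (f' \<cdot> x) = (f \<cdot> d') \<cdot> x" using p x by (simp flip: comp_assoc)
    also have "\<dots> = Z (Dom C (f' \<cdot> x)) (Cod C d)"
      using p x by (simp add: comp_assoc)
    finally obtain v where v: "v \<in> Mor C" "Dom C v = Dom C x" "Cod C v = Dom C i" "i \<cdot> v = f' \<cdot> x"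
      using kernel_factor[OF k, of "f' \<cdot> x"] p x by auto
    have "i' \<cdot> v = x"
    proof (rule pullback_cancel[OF pb])
      show "d' \<cdot> (i' \<cdot> v) = d' \<cdot> x" using p i' v x by (simp flip: comp_assoc)
      show "f' \<cdot> (i' \<cdot> v) = f' \<cdot> x" using p i' v x by (simp flip: comp_assoc)
    qed (use p i' v x in simp_all)
    then show "\<exists>g. g \<in> Mor C \<and> Dom C g = Dom C x \<and> Cod C g = Dom C i' \<and> i' \<cdot> g = x"
      using v i' by auto
  next
    fix x y assume xy: "x \<in> Mor C" "y \<in> Mor C" "Dom C y = Dom C x" "Cod C x = Dom C i'"
      "Cod C y = Dom C i'" "i' \<cdot> x = i' \<cdot> y"
    have "f' \<cdot> (i' \<cdot> x) = f' \<cdot> (i' \<cdot> y)" using xy by simp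
    then have "i \<cdot> x = i \<cdot> y" using p i' xy(1-5) by (simp flip: comp_assoc)
    with xy i' show "x = y" using kernel_cancel[OF k, of x y] by simp
  qed (use p i' in simp_all)
  then show ?thesis using i' by blast
qed

lemma pushout_comparison:
  assumes po: "is_pushout C i f i' f'"
    and d': "d' \<in> Mor C" "Dom C d' = Cod C i'" "d' \<cdot> i' = Z (Dom C i') (Cod C d')" "d' \<cdot> f' = d"
    and sq: "j \<in> Mor C" "g \<in> Mor C" "e \<in> Mor C" "Dom C j = Cod C f" "Dom C g = Cod C i"
      "Cod C g = Cod C j" "Dom C e = Cod C j" "j \<cdot> f = g \<cdot> i" "e \<cdot> j = Z (Dom C j) (Cod C e)" "e \<cdot> g = d"
  shows "\<exists>u. u \<in> Mor C \<and> Dom C u = Cod C i' \<and> Cod C u = Cod C j \<and> u \<cdot> i' = j \<and> u \<cdot> f' = g \<and> e \<cdot> u = d'"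
proof -
  note p = pushoutD[OF po]
  obtain u where u: "u \<in> Mor C" "Dom C u = Cod C i'" "Cod C u = Cod C j" "u \<cdot> i' = j" "u \<cdot> f' = g"
    using pushout_factor[OF po sq(1,2,4,5,6,8)] by blast
  have cod: "Cod C e = Cod C d'"
    using d' sq p by (metis cod_comp)
  have "e \<cdot> u = d'"
  proof (rule pushout_cancel[OF po])
    show "(e \<cdot> u) \<cdot> i' = d' \<cdot> i'" using p d' sq u cod by (simp add: comp_assoc)
    show "(e \<cdot> u) \<cdot> f' = d' \<cdot> f'" using p d' sq u by (simp add: comp_assoc)
  qed (use p d' sq u cod in simp_all)
  then show ?thesis using u by blast
qed

lemma pullback_comparison:
  assumes pb: "is_pullback C d f d' f'"
    and i': "i' \<in> Mor C" "Cod C i' = Dom C d'" "d' \<cdot> i' = Z (Dom C i') (Cod C d')" "f' \<cdot> i' = i"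
    and sq: "x \<in> Mor C" "y \<in> Mor C" "k \<in> Mor C" "Cod C x = Dom C f" "Cod C y = Dom C d"
      "Dom C y = Dom C x" "Cod C k = Dom C x" "f \<cdot> x = d \<cdot> y" "x \<cdot> k = Z (Dom C k) (Cod C x)" "y \<cdot> k = i"
  shows "\<exists>u. u \<in> Mor C \<and> Dom C u = Dom C x \<and> Cod C u = Dom C d' \<and> d' \<cdot> u = x \<and> f' \<cdot> u = y \<and> u \<cdot> k = i'"
proof -
  note p = pullbackD[OF pb]
  obtain u where u: "u \<in> Mor C" "Dom C u = Dom C x" "Cod C u = Dom C d'" "d' \<cdot> u = x" "f' \<cdot> u = y"
    using pullback_factor[OF pb sq(1,2,4,5,6,8)] by blast
  have dom: "Dom C k = Dom C i'"
    using i' sq p by (metis dom_comp)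
  have "u \<cdot> k = i'"
  proof (rule pullback_cancel[OF pb])
    show "d' \<cdot> (u \<cdot> k) = d' \<cdot> i'" using p i' sq u dom by (simp flip: comp_assoc)
    show "f' \<cdot> (u \<cdot> k) = f' \<cdot> i'" using p i' sq u by (simp flip: comp_assoc)
  qed (use p i' sq u dom in simp_all)
  then show ?thesis using u by blast
qed

lemma iso_intro:
  "f \<in> Mor C \<Longrightarrow> g \<in> Mor C \<Longrightarrow> Dom C g = Cod C f \<Longrightarrow> Cod C g = Dom C f \<Longrightarrow>
   g \<cdot> f = I (Dom C f) \<Longrightarrow> f \<cdot> g = I (Cod C f) \<Longrightarrow> iso C f"
  unfolding iso_def by (auto simp: hom_iff)

lemma iso_inverse:
  assumes "iso C f"
  obtains g where "g \<in> Mor C" "Dom C g = Cod C f" "Cod C g = Dom C f"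
    "g \<cdot> f = I (Dom C f)" "f \<cdot> g = I (Cod C f)"
proof -
  from assms obtain g where "g \<in> hom C (Cod C f) (Dom C f)" "g \<cdot> f = I (Dom C f)" "f \<cdot> g = I (Cod C f)"
    unfolding iso_def by blast
  then show ?thesis using that unfolding hom_iff by blast
qed

lemma iso_id: "a \<in> Obj C \<Longrightarrow> iso C (I a)"
  by (rule iso_intro[of _ "I a"]) auto

lemma kernel_unique_iso:
  assumes k: "is_kernel C i d" and k': "is_kernel C i' d"
  shows "\<exists>h. iso C h \<and> h \<in> hom C (Dom C i) (Dom C i') \<and> i' \<cdot> h = i"
proof -
  note a = kernelD[OF k] and b = kernelD[OF k']
  obtain h where h: "h \<in> Mor C" "Dom C h = Dom C i" "Cod C h = Dom C i'" "i' \<cdot> h = i"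
    using kernel_factor[OF k' a(1,3,4)] by blast
  obtain g where g: "g \<in> Mor C" "Dom C g = Dom C i'" "Cod C g = Dom C i" "i \<cdot> g = i'"
    using kernel_factor[OF k b(1,3,4)] by blast
  have "i \<cdot> (g \<cdot> h) = i \<cdot> I (Dom C i)" using a g h by (simp flip: comp_assoc)
  then have gh: "g \<cdot> h = I (Dom C i)" using a g h kernel_cancel[OF k, of "g \<cdot> h" "I (Dom C i)"] by simp
  have "i' \<cdot> (h \<cdot> g) = i' \<cdot> I (Dom C i')" using b g h by (simp flip: comp_assoc)
  then have hg: "h \<cdot> g = I (Dom C i')" using b g h kernel_cancel[OF k', of "h \<cdot> g" "I (Dom C i')"] by simp
  have "iso C h" using iso_intro[OF h(1) g(1)] g h gh hg by simp
  then show ?thesis using h by (auto simp: hom_iff)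
qed

lemma cokernel_unique_iso:
  assumes c: "is_cokernel C d i" and c': "is_cokernel C d' i"
  shows "\<exists>h. iso C h \<and> h \<in> hom C (Cod C d) (Cod C d') \<and> h \<cdot> d = d'"
proof -
  note a = cokernelD[OF c] and b = cokernelD[OF c']
  obtain h where h: "h \<in> Mor C" "Dom C h = Cod C d" "Cod C h = Cod C d'" "h \<cdot> d = d'"
    using cokernel_factor[OF c b(2)] b a by auto
  obtain g where g: "g \<in> Mor C" "Dom C g = Cod C d'" "Cod C g = Cod C d" "g \<cdot> d' = d"
    using cokernel_factor[OF c' a(2)] a b by auto
  have "(g \<cdot> h) \<cdot> d = I (Cod C d) \<cdot> d" using a g h by (simp add: comp_assoc)
  then have gh: "g \<cdot> h = I (Cod C d)" using a g h cokernel_cancel[OF c, of "g \<cdot> h" "I (Cod C d)"] by simp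
  have "(h \<cdot> g) \<cdot> d' = I (Cod C d') \<cdot> d'" using b g h by (simp add: comp_assoc)
  then have hg: "h \<cdot> g = I (Cod C d')" using b g h cokernel_cancel[OF c', of "h \<cdot> g" "I (Cod C d')"] by simp
  have "iso C h" using iso_intro[OF h(1) g(1)] g h gh hg by simp
  then show ?thesis using h by (auto simp: hom_iff)
qed

lemma pullback_difference_factor:
  assumes pb: "is_pullback C b e q1 q2" and k: "is_kernel C c e"
    and u: "u \<in> Mor C" "Dom C u = Dom C b" "Cod C u = Dom C e" "e \<cdot> u = b"
  shows "\<exists>y. y \<in> Mor C \<and> Dom C y = Dom C q1 \<and> Cod C y = Dom C c \<and> c \<cdot> y = q1 \<oplus> neg (u \<cdot> q2)"
proof -
  note P = pullbackD[OF pb] and K = kernelD[OF k]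
  have "e \<cdot> (q1 \<oplus> neg (u \<cdot> q2)) = e \<cdot> q1 \<oplus> neg (e \<cdot> (u \<cdot> q2))"
    using P u by (simp add: comp_add_right)
  also have "\<dots> = Z (Dom C q1) (Cod C e)"
    using P u by (simp flip: comp_assoc)
  finally show ?thesis
    using kernel_factor[OF k, of "q1 \<oplus> neg (u \<cdot> q2)"] P K u by simp
qed

end

section \<open>Exact categories\<close>

locale exact_cat =
  fixes C :: "('o, 'm) addcat" and E :: "('m \<times> 'm) set"
  assumes exact: "exact_category C E"

sublocale exact_cat \<subseteq> preadditive_cat
  using exact unfolding exact_category_def additive_def by unfold_locales blast

context exact_cat
begin

lemma conflation_kernel: "(i, d) \<in> E \<Longrightarrow> is_kernel C i d"
  and conflation_cokernel: "(i, d) \<in> E \<Longrightarrow> is_cokernel C d i"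
  using exact unfolding exact_category_def kc_pair_def by auto

lemma conflationD:
  assumes "(i, d) \<in> E"
  shows "i \<in> Mor C" "d \<in> Mor C" "Cod C i = Dom C d" "d \<cdot> i = Z (Dom C i) (Cod C d)"
  using kernelD[OF conflation_kernel[OF assms]] .

lemma conflation_iso_closed:
  assumes "(i, d) \<in> E" "i' \<in> Mor C" "d' \<in> Mor C" "Cod C i' = Dom C d'"
    "iso C f" "iso C g" "iso C h" "f \<in> hom C (Dom C i) (Dom C i')" "g \<in> hom C (Cod C i) (Cod C i')"
    "h \<in> hom C (Cod C d) (Cod C d')" "i' \<cdot> f = g \<cdot> i" "d' \<cdot> g = h \<cdot> d"
  shows "(i', d') \<in> E"
proof -
  have "\<forall>(i, d)\<in>E. \<forall>i' d' f g h.
      i' \<in> Mor C \<and> d' \<in> Mor C \<and> Cod C i' = Dom C d' \<and> iso C f \<and> iso C g \<and> iso C h \<and>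
      f \<in> hom C (Dom C i) (Dom C i') \<and> g \<in> hom C (Cod C i) (Cod C i') \<and>
      h \<in> hom C (Cod C d) (Cod C d') \<and> i' \<cdot> f = g \<cdot> i \<and> d' \<cdot> g = h \<cdot> d \<longrightarrow> (i', d') \<in> E"
    using exact unfolding exact_category_def by (elim conjE)
  with assms show ?thesis by blast
qed

lemma deflation_id: "a \<in> Obj C \<Longrightarrow> \<exists>i. (i, I a) \<in> E"
  and inflation_id: "a \<in> Obj C \<Longrightarrow> \<exists>d. (I a, d) \<in> E"
  using exact unfolding exact_category_def deflation_def inflation_def by blast+

lemma deflation_comp:
  assumes "(i, d) \<in> E" "(i', d') \<in> E" "Cod C d = Dom C d'"
  shows "\<exists>j. (j, d' \<cdot> d) \<in> E"
proof -
  have "\<forall>d d'. deflation C E d \<and> deflation C E d' \<and> Cod C d = Dom C d' \<longrightarrow> deflation C E (d' \<cdot> d)"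
    using exact unfolding exact_category_def by (elim conjE)
  with assms show ?thesis unfolding deflation_def by blast
qed

lemma inflation_comp:
  assumes "(i, d) \<in> E" "(i', d') \<in> E" "Cod C i = Dom C i'"
  shows "\<exists>e. (i' \<cdot> i, e) \<in> E"
proof -
  have "\<forall>i i'. inflation C E i \<and> inflation C E i' \<and> Cod C i = Dom C i' \<longrightarrow> inflation C E (i' \<cdot> i)"
    using exact unfolding exact_category_def by (elim conjE)
  with assms show ?thesis unfolding inflation_def by blast
qed

lemma inflation_pushout:
  assumes "(i, d) \<in> E" "f \<in> Mor C" "Dom C f = Dom C i"
  shows "\<exists>i' f' e. is_pushout C i f i' f' \<and> (i', e) \<in> E"
proof -
  have "\<forall>i f. inflation C E i \<and> f \<in> Mor C \<and> Dom C f = Dom C i \<longrightarrow>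
      (\<exists>i' f'. is_pushout C i f i' f' \<and> inflation C E i')"
    using exact unfolding exact_category_def by (elim conjE)
  with assms show ?thesis unfolding inflation_def by blast
qed

lemma deflation_pullback:
  assumes "(i, d) \<in> E" "f \<in> Mor C" "Cod C f = Cod C d"
  shows "\<exists>d' f' j. is_pullback C d f d' f' \<and> (j, d') \<in> E"
proof -
  have "\<forall>d f. deflation C E d \<and> f \<in> Mor C \<and> Cod C f = Cod C d \<longrightarrow>
      (\<exists>d' f'. is_pullback C d f d' f' \<and> deflation C E d')"
    using exact unfolding exact_category_def by (elim conjE)
  with assms show ?thesis unfolding deflation_def by blast
qed

lemma conflation_kernel_replace:
  assumes cf: "(i, d) \<in> E" and k: "is_kernel C i' d"
  shows "(i', d) \<in> E"
proof -
  note a = conflationD[OF cf] and b = kernelD[OF k]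
  obtain h where h: "iso C h" "h \<in> hom C (Dom C i) (Dom C i')" "i' \<cdot> h = i"
    using kernel_unique_iso[OF conflation_kernel[OF cf] k] by blast
  show ?thesis
  proof (rule conflation_iso_closed[OF cf b(1,2,3) h(1) iso_id iso_id h(2)])
    show "I (Cod C i) \<in> hom C (Cod C i) (Cod C i')" "I (Cod C d) \<in> hom C (Cod C d) (Cod C d)"
      using a b by (simp_all add: hom_iff)
    show "i' \<cdot> h = I (Cod C i) \<cdot> i" "d \<cdot> I (Cod C i) = I (Cod C d) \<cdot> d" using a h by simp_all
  qed (use a in simp_all)
qed

lemma conflation_cokernel_replace:
  assumes cf: "(i, d) \<in> E" and c: "is_cokernel C d' i"
  shows "(i, d') \<in> E"
proof -
  note a = conflationD[OF cf] and b = cokernelD[OF c]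
  obtain h where h: "iso C h" "h \<in> hom C (Cod C d) (Cod C d')" "h \<cdot> d = d'"
    using cokernel_unique_iso[OF conflation_cokernel[OF cf] c] by blast
  show ?thesis
  proof (rule conflation_iso_closed[OF cf b(1,2,3) iso_id iso_id h(1) _ _ h(2)])
    show "I (Dom C i) \<in> hom C (Dom C i) (Dom C i)" "I (Cod C i) \<in> hom C (Cod C i) (Cod C i)"
      using a by (simp_all add: hom_iff)
    show "i \<cdot> I (Dom C i) = I (Cod C i) \<cdot> i" "d' \<cdot> I (Cod C i) = h \<cdot> d" using a b h by simp_all
  qed (use a in simp_all)
qed

lemma conflation_pushout:
  assumes cf: "(i, d) \<in> E" and f: "f \<in> Mor C" "Dom C f = Dom C i"
  shows "\<exists>i' f' d'. is_pushout C i f i' f' \<and> (i', d') \<in> E \<and> d' \<cdot> f' = d"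
proof -
  obtain i' f' e where po: "is_pushout C i f i' f'" and "(i', e) \<in> E"
    using inflation_pushout[OF cf f] by blast
  moreover obtain d' where "d' \<cdot> f' = d" "is_cokernel C d' i'"
    using pushout_cokernel[OF po conflation_cokernel[OF cf]] by blast
  ultimately show ?thesis using conflation_cokernel_replace by blast
qed

lemma conflation_pullback:
  assumes cf: "(i, d) \<in> E" and f: "f \<in> Mor C" "Cod C f = Cod C d"
  shows "\<exists>d' f' i'. is_pullback C d f d' f' \<and> (i', d') \<in> E \<and> f' \<cdot> i' = i"
proof -
  obtain d' f' j where pb: "is_pullback C d f d' f'" and "(j, d') \<in> E"
    using deflation_pullback[OF cf f] by blast
  moreover obtain i' where "f' \<cdot> i' = i" "is_kernel C i' d'"
    using pullback_kernel[OF pb conflation_kernel[OF cf]] by blast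
  ultimately show ?thesis using conflation_kernel_replace by blast
qed

lemma short_five_pullback:
  assumes ab: "(a, b) \<in> E" and e: "e \<in> Mor C" "Cod C e = Cod C b"
    and u: "u \<in> Mor C" "Dom C u = Cod C a" "Cod C u = Dom C e" "e \<cdot> u = b"
  obtains q1 q2 k t where "is_pullback C b e q1 q2" "(k, q1) \<in> E" "q2 \<cdot> k = a"
    "t \<in> Mor C" "Dom C t = Cod C a" "Cod C t = Dom C q1" "q1 \<cdot> t = u" "q2 \<cdot> t = I (Cod C a)"
proof -
  note A = conflationD[OF ab]
  obtain q1 q2 k where pb: "is_pullback C b e q1 q2" and kq: "(k, q1) \<in> E" and q2k: "q2 \<cdot> k = a"
    using conflation_pullback[OF ab e] by blast
  have "e \<cdot> u = b \<cdot> I (Dom C b)" using A u by simp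
  then obtain t where "t \<in> Mor C" "Dom C t = Dom C b" "Cod C t = Dom C q1" "q1 \<cdot> t = u"
      "q2 \<cdot> t = I (Dom C b)"
    using pullback_factor[OF pb u(1) id_mor[of "Dom C b"]] A u by fastforce
  then show ?thesis using that[OF pb kq q2k] A by simp
qed

text \<open>
  Think of the pullback \<open>P\<close> of \<open>b\<close> and \<open>e\<close> as pairs \<open>(m, n)\<close> with \<open>b m = e n\<close>, so that
  \<open>t m = (m, u m)\<close> and \<open>k x = (a x, 0)\<close>. The inverse of \<open>u\<close> is
  \<open>v n = m + a (c\<^sup>-\<^sup>1 (n - u m))\<close> for any \<open>(m, n) \<in> P\<close>: the correction \<open>y = c\<^sup>-\<^sup>1 (q1 - u q2)\<close>
  satisfies \<open>y k = -1\<close> and \<open>y t = 0\<close>, so \<open>w = q2 + a y\<close> vanishes on \<open>k\<close> and descends along the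
  deflation \<open>q1\<close>.
\<close>

lemma short_five:
  assumes ab: "(a, b) \<in> E" and ce: "(c, e) \<in> E"
    and u: "u \<in> Mor C" "Dom C u = Cod C a" "Cod C u = Cod C c" "u \<cdot> a = c" "e \<cdot> u = b"
  shows "iso C u"
proof -
  note A = conflationD[OF ab] and B = conflationD[OF ce]
  have dom_c: "Dom C c = Dom C a" and cod_e: "Cod C e = Cod C b"
    using A B u dom_comp[of a u] cod_comp[of u e] by simp_all
  obtain q1 q2 k t where pb: "is_pullback C b e q1 q2" and kq: "(k, q1) \<in> E" and q2k: "q2 \<cdot> k = a"
      and t: "t \<in> Mor C" "Dom C t = Cod C a" "Cod C t = Dom C q1" "q1 \<cdot> t = u" "q2 \<cdot> t = I (Cod C a)"
    using short_five_pullback[OF ab B(2) cod_e] u B(3) by metis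
  note P = pullbackD[OF pb] and K = conflationD[OF kq]
  have q2k_cod: "Cod C k = Dom C q1" "Dom C k = Dom C a"
    using K P q2k dom_comp[of k q2] by simp_all
  note S = A B P K u t dom_c cod_e q2k_cod q2k
  define r where "r = q1 \<oplus> neg (u \<cdot> q2)"
  have R: "r \<in> Mor C" "Dom C r = Dom C q1" "Cod C r = Cod C c"
    unfolding r_def using S by simp_all
  obtain y where y: "y \<in> Mor C" "Dom C y = Dom C q1" "Cod C y = Dom C a" "c \<cdot> y = r"
    using pullback_difference_factor[OF pb conflation_kernel[OF ce]] S unfolding r_def by auto
  have "c \<cdot> (y \<cdot> k) = r \<cdot> k"
    using S y by (simp flip: comp_assoc)
  also have "\<dots> = q1 \<cdot> k \<oplus> neg (u \<cdot> (q2 \<cdot> k))"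
    unfolding r_def using S by (simp add: comp_add_left comp_assoc)
  also have "\<dots> = c \<cdot> neg (I (Dom C a))"
    using S by simp
  finally have yk: "y \<cdot> k = neg (I (Dom C a))"
    using S y kernel_cancel[OF conflation_kernel[OF ce], of "y \<cdot> k" "neg (I (Dom C a))"] by simp
  have "c \<cdot> (y \<cdot> t) = r \<cdot> t"
    using S y by (simp flip: comp_assoc)
  also have "\<dots> = q1 \<cdot> t \<oplus> neg (u \<cdot> (q2 \<cdot> t))"
    unfolding r_def using S by (simp add: comp_add_left comp_assoc)
  also have "\<dots> = c \<cdot> Z (Dom C b) (Dom C a)"
    using S by simp
  finally have yt: "y \<cdot> t = Z (Dom C b) (Dom C a)"
    using S y kernel_cancel[OF conflation_kernel[OF ce], of "y \<cdot> t" "Z (Dom C b) (Dom C a)"] by simp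
  define w where "w = q2 \<oplus> a \<cdot> y"
  have W: "w \<in> Mor C" "Dom C w = Dom C q1" "Cod C w = Dom C b"
    unfolding w_def using S y by simp_all
  have "w \<cdot> k = a \<oplus> a \<cdot> (y \<cdot> k)"
    unfolding w_def using S y by (simp add: comp_add_left comp_assoc)
  also have "\<dots> = Z (Dom C k) (Cod C w)"
    using S W yk by simp
  finally obtain v where v: "v \<in> Mor C" "Dom C v = Cod C q1" "Cod C v = Dom C b" "v \<cdot> q1 = w"
    using cokernel_factor[OF conflation_cokernel[OF kq] W(1)] S W by auto
  have "v \<cdot> u = (v \<cdot> q1) \<cdot> t"
    using S v(1-3) by (simp add: comp_assoc)
  also have "\<dots> = q2 \<cdot> t \<oplus> a \<cdot> (y \<cdot> t)"
    using S y v(4)[unfolded w_def] by (simp add: comp_add_left comp_assoc)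
  also have "\<dots> = I (Cod C a)"
    using S yt by simp
  finally have vu: "v \<cdot> u = I (Cod C a)" .
  have "(u \<cdot> v) \<cdot> q1 = u \<cdot> w"
    using S v by (simp add: comp_assoc)
  also have "\<dots> = u \<cdot> q2 \<oplus> (u \<cdot> a) \<cdot> y"
    unfolding w_def using S y by (simp add: comp_add_right flip: comp_assoc)
  also have "\<dots> = u \<cdot> q2 \<oplus> (neg (u \<cdot> q2) \<oplus> q1)"
    using S y R add_commute[of q1 "neg (u \<cdot> q2)"] unfolding r_def by simp
  also have "\<dots> = (u \<cdot> q2 \<oplus> neg (u \<cdot> q2)) \<oplus> q1"
    using S by - (rule add_assoc[symmetric], simp_all)
  also have "\<dots> = I (Cod C c) \<cdot> q1"
    using S by simp
  finally have uv: "u \<cdot> v = I (Cod C c)"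
    using S v cokernel_cancel[OF conflation_cokernel[OF kq], of "u \<cdot> v" "I (Cod C c)"] by simp
  show ?thesis
    using iso_intro[OF u(1) v(1)] S v vu uv by simp
qed

end

section \<open>Additive functors\<close>

locale additive_functor_cat = A: preadditive_cat A + B: preadditive_cat B
  for A :: "('o, 'm) addcat" and B :: "('p, 'n) addcat" +
  fixes LO :: "'o \<Rightarrow> 'p" and LM :: "'m \<Rightarrow> 'n"
  assumes additive_functor: "additive_functor A B LO LM"
begin

lemma obj_image [simp]: "a \<in> Obj A \<Longrightarrow> LO a \<in> Obj B"
  and preserves_id [simp]: "a \<in> Obj A \<Longrightarrow> LM (Id A a) = Id B (LO a)"
  using additive_functor unfolding additive_functor_def by blast+

lemma mor_image [simp]: "f \<in> Mor A \<Longrightarrow> LM f \<in> Mor B"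
  and dom_image [simp]: "f \<in> Mor A \<Longrightarrow> Dom B (LM f) = LO (Dom A f)"
  and cod_image [simp]: "f \<in> Mor A \<Longrightarrow> Cod B (LM f) = LO (Cod A f)"
  using additive_functor unfolding additive_functor_def hom_def by blast+

lemma preserves_comp [simp]:
  "f \<in> Mor A \<Longrightarrow> g \<in> Mor A \<Longrightarrow> Cod A f = Dom A g \<Longrightarrow> LM (Comp A g f) = Comp B (LM g) (LM f)"
  using additive_functor unfolding additive_functor_def by blast

lemma preserves_zero [simp]:
  assumes "a \<in> Obj A" "b \<in> Obj A"
  shows "LM (Zero A a b) = Zero B (LO a) (LO b)"
proof -
  have z: "Zero A a b \<in> hom A a b" using assms by (rule A.zero_hom)
  then have "LM (Add A (Zero A a b) (Zero A a b)) = Add B (LM (Zero A a b)) (LM (Zero A a b))"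
    using additive_functor assms unfolding additive_functor_def by blast
  then have "Add B (LM (Zero A a b)) (LM (Zero A a b)) = LM (Zero A a b)"
    using A.add_hom_zero[OF z] by simp
  then have "LM (Zero A a b) = Zero B (Dom B (LM (Zero A a b))) (Cod B (LM (Zero A a b)))"
    using assms by - (rule B.idempotent_is_zero, simp_all)
  also have "\<dots> = Zero B (LO a) (LO b)"
    using assms by simp
  finally show ?thesis .
qed

lemma preserves_iso:
  assumes "iso A f"
  shows "iso B (LM f)"
proof -
  obtain g where g: "g \<in> Mor A" "Dom A g = Cod A f" "Cod A g = Dom A f"
      "Comp A g f = Id A (Dom A f)" "Comp A f g = Id A (Cod A f)"
    using A.iso_inverse[OF assms] by blast
  have "f \<in> Mor A" using assms unfolding iso_def by blast
  then show ?thesis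
    using B.iso_intro[of "LM f" "LM g"] g preserves_comp[of f g] preserves_comp[of g f] by simp
qed

end

section \<open>Restricting an exact structure along an exact functor\<close>

locale exact_structure_restriction =
  A: exact_cat A E + B: exact_cat B F + B': exact_cat B F'
  for A :: "('o, 'm) addcat" and E and B :: "('p, 'n) addcat" and F F' +
  fixes LO :: "'o \<Rightarrow> 'p" and LM :: "'m \<Rightarrow> 'n"
  assumes exact_functor: "exact_functor A E B F LO LM" and sub: "F' \<subseteq> F"
begin

sublocale additive_functor_cat A B LO LM
  using exact_functor unfolding exact_functor_def by unfold_locales blast

definition E' :: "('m \<times> 'm) set" where
  "E' = {(i, d) \<in> E. (LM i, LM d) \<in> F'}"

lemma conflation_image: "(i, d) \<in> E \<Longrightarrow> (LM i, LM d) \<in> F"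
  using exact_functor unfolding exact_functor_def by blast

lemma F'_if_F'_deflation: "(j, e) \<in> F \<Longrightarrow> (j', e) \<in> F' \<Longrightarrow> (j, e) \<in> F'"
  using B'.conflation_kernel_replace B.conflation_kernel by blast

lemma F'_if_F'_inflation: "(j, e) \<in> F \<Longrightarrow> (j, e') \<in> F' \<Longrightarrow> (j, e) \<in> F'"
  using B'.conflation_cokernel_replace B.conflation_cokernel by blast

lemma F'_if_comparison_from_F':
  assumes ab: "(a, b) \<in> F'" and ce: "(c, e) \<in> F"
    and u: "u \<in> Mor B" "Dom B u = Cod B a" "Cod B u = Cod B c" "Comp B u a = c" "Comp B e u = b"
  shows "(c, e) \<in> F'"
proof -
  have abF: "(a, b) \<in> F" using ab sub by blast
  note a = B.conflationD[OF abF] and c = B.conflationD[OF ce]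
  have iso: "iso B u" using B.short_five[OF abF ce u] .
  have ends: "Dom B c = Dom B a" "Cod B e = Cod B b"
    using a c u B.dom_comp[of a u] B.cod_comp[of u e] by simp_all
  show ?thesis
  proof (rule B'.conflation_iso_closed[OF ab c(1,2,3) B.iso_id[of "Dom B a"] iso B.iso_id[of "Cod B b"]])
    show "Id B (Dom B a) \<in> hom B (Dom B a) (Dom B c)" "u \<in> hom B (Cod B a) (Cod B c)"
      "Id B (Cod B b) \<in> hom B (Cod B b) (Cod B e)"
      using a c u ends by (simp_all add: B.hom_iff)
    show "Comp B c (Id B (Dom B a)) = Comp B u a" "Comp B e u = Comp B (Id B (Cod B b)) b"
      using a c u ends by simp_all
  qed (use a in simp_all)
qed

lemma F'_if_comparison_to_F':
  assumes ce: "(c, e) \<in> F" and ab: "(a, b) \<in> F'"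
    and u: "u \<in> Mor B" "Dom B u = Cod B c" "Cod B u = Cod B a" "Comp B u c = a" "Comp B b u = e"
  shows "(c, e) \<in> F'"
proof -
  have abF: "(a, b) \<in> F" using ab sub by blast
  note a = B.conflationD[OF abF] and c = B.conflationD[OF ce]
  obtain v where v: "v \<in> Mor B" "Dom B v = Cod B u" "Cod B v = Dom B u"
      "Comp B v u = Id B (Dom B u)" "Comp B u v = Id B (Cod B u)"
    using B.iso_inverse[OF B.short_five[OF ce abF u]] by blast
  have "Comp B v a = Comp B (Comp B v u) c" using u v(1-3) c by (simp add: B.comp_assoc)
  moreover have "Comp B e v = Comp B b (Comp B u v)" using u v(1-3) a by (simp flip: B.comp_assoc)
  ultimately show ?thesis
    using F'_if_comparison_from_F'[OF ab ce, of v] u v a c by simp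
qed

lemma E'_inflation_pushout:
  assumes inf: "inflation A E' i" and f: "f \<in> Mor A" "Dom A f = Dom A i"
  shows "\<exists>i' f'. is_pushout A i f i' f' \<and> inflation A E' i'"
proof -
  obtain d where e: "(i, d) \<in> E" "(LM i, LM d) \<in> F'" using inf unfolding inflation_def E'_def by blast
  note a = A.conflationD[OF e(1)]
  obtain i' f' d' where po: "is_pushout A i f i' f'" and e': "(i', d') \<in> E" and d': "Comp A d' f' = d"
    using A.conflation_pushout[OF e(1) f] by blast
  note P = A.pushoutD[OF po] and a' = A.conflationD[OF e']
  obtain \<iota> g \<delta> where po': "is_pushout B (LM i) (LM f) \<iota> g" and e'': "(\<iota>, \<delta>) \<in> F'"
      and \<delta>: "Comp B \<delta> g = LM d"
    using B'.conflation_pushout[OF e(2), of "LM f"] f a by auto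
  note Q = B.pushoutD[OF po'] and b = B'.conflationD[OF e'']
  have "\<exists>u. u \<in> Mor B \<and> Dom B u = Cod B \<iota> \<and> Cod B u = Cod B (LM i') \<and> Comp B u \<iota> = LM i' \<and>
      Comp B u g = LM f' \<and> Comp B (LM d') u = \<delta>"
  proof (rule B.pushout_comparison[OF po' b(2) _ _ \<delta>])
    show "Comp B (LM i') (LM f) = Comp B (LM f') (LM i)" using P by (metis preserves_comp)
    show "Comp B (LM d') (LM f') = LM d" using P a' d'[symmetric] by simp
    show "Comp B (LM d') (LM i') = Zero B (Dom B (LM i')) (Cod B (LM d'))"
      using a' preserves_comp[of i' d'] by simp
  qed (use P Q a a' b d' in simp_all)
  then obtain u where "u \<in> Mor B" "Dom B u = Cod B \<iota>" "Cod B u = Cod B (LM i')"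
      "Comp B u \<iota> = LM i'" "Comp B (LM d') u = \<delta>"
    by blast
  then have "(LM i', LM d') \<in> F'"
    using F'_if_comparison_from_F'[OF e'' conflation_image[OF e']] by blast
  then show ?thesis using po e' unfolding inflation_def E'_def by blast
qed

lemma E'_deflation_pullback:
  assumes def: "deflation A E' d" and f: "f \<in> Mor A" "Cod A f = Cod A d"
  shows "\<exists>d' f'. is_pullback A d f d' f' \<and> deflation A E' d'"
proof -
  obtain i where e: "(i, d) \<in> E" "(LM i, LM d) \<in> F'" using def unfolding deflation_def E'_def by blast
  note a = A.conflationD[OF e(1)]
  obtain d' f' i' where pb: "is_pullback A d f d' f'" and e': "(i', d') \<in> E" and i': "Comp A f' i' = i"
    using A.conflation_pullback[OF e(1) f] by blast
  note P = A.pullbackD[OF pb] and a' = A.conflationD[OF e']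
  obtain \<delta> g \<iota> where pb': "is_pullback B (LM d) (LM f) \<delta> g" and e'': "(\<iota>, \<delta>) \<in> F'"
      and \<iota>: "Comp B g \<iota> = LM i"
    using B'.conflation_pullback[OF e(2), of "LM f"] f a by auto
  note Q = B.pullbackD[OF pb'] and b = B'.conflationD[OF e'']
  have "\<exists>u. u \<in> Mor B \<and> Dom B u = Dom B (LM d') \<and> Cod B u = Dom B \<delta> \<and> Comp B \<delta> u = LM d' \<and>
      Comp B g u = LM f' \<and> Comp B u (LM i') = \<iota>"
  proof (rule B.pullback_comparison[OF pb' b(1) _ _ \<iota>])
    show "Comp B (LM f) (LM d') = Comp B (LM d) (LM f')" using P by (metis preserves_comp)
    show "Comp B (LM f') (LM i') = LM i" using P a' i'[symmetric] by simp
    show "Comp B (LM d') (LM i') = Zero B (Dom B (LM i')) (Cod B (LM d'))"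
      using a' preserves_comp[of i' d'] by simp
  qed (use P Q a a' b i' in simp_all)
  then obtain u where "u \<in> Mor B" "Dom B u = Cod B (LM i')" "Cod B u = Cod B \<iota>"
      "Comp B u (LM i') = \<iota>" "Comp B \<delta> u = LM d'"
    using P a' Q b by auto
  then have "(LM i', LM d') \<in> F'"
    using F'_if_comparison_to_F'[OF conflation_image[OF e'] e''] by blast
  then show ?thesis using pb e' unfolding deflation_def E'_def by blast
qed

lemma E'_iso_closed:
  assumes id: "(i, d) \<in> E'" and h: "i' \<in> Mor A" "d' \<in> Mor A" "Cod A i' = Dom A d'"
    "iso A f" "iso A g" "iso A h" "f \<in> hom A (Dom A i) (Dom A i')" "g \<in> hom A (Cod A i) (Cod A i')"
    "h \<in> hom A (Cod A d) (Cod A d')" "Comp A i' f = Comp A g i" "Comp A d' g = Comp A h d"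
  shows "(i', d') \<in> E'"
proof -
  have e: "(i, d) \<in> E" "(LM i, LM d) \<in> F'" using id unfolding E'_def by auto
  note a = A.conflationD[OF e(1)]
  have fgh: "f \<in> Mor A" "Dom A f = Dom A i" "Cod A f = Dom A i'" "g \<in> Mor A" "Dom A g = Cod A i"
      "Cod A g = Cod A i'" "h \<in> Mor A" "Dom A h = Cod A d" "Cod A h = Cod A d'"
    using h(7-9) unfolding A.hom_iff by auto
  have "(LM i', LM d') \<in> F'"
  proof (rule B'.conflation_iso_closed[OF e(2) _ _ _ preserves_iso preserves_iso preserves_iso])
    show "Comp B (LM i') (LM f) = Comp B (LM g) (LM i)" "Comp B (LM d') (LM g) = Comp B (LM h) (LM d)"
      using h(1-3,10,11) fgh a by (metis preserves_comp)+
  qed (use h fgh a in \<open>simp_all add: B.hom_iff\<close>)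
  then show ?thesis using A.conflation_iso_closed[OF e(1) h] unfolding E'_def by blast
qed

lemma E'_deflation_id: "a \<in> Obj A \<Longrightarrow> deflation A E' (Id A a)"
proof -
  assume a: "a \<in> Obj A"
  obtain i where i: "(i, Id A a) \<in> E" using A.deflation_id[OF a] by blast
  obtain j where "(j, Id B (LO a)) \<in> F'" using B'.deflation_id[of "LO a"] a by auto
  then have "(LM i, LM (Id A a)) \<in> F'" using F'_if_F'_deflation conflation_image[OF i] a by simp
  then show ?thesis using i unfolding deflation_def E'_def by blast
qed

lemma E'_inflation_id: "a \<in> Obj A \<Longrightarrow> inflation A E' (Id A a)"
proof -
  assume a: "a \<in> Obj A"
  obtain d where d: "(Id A a, d) \<in> E" using A.inflation_id[OF a] by blast
  obtain j where "(Id B (LO a), j) \<in> F'" using B'.inflation_id[of "LO a"] a by auto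
  then have "(LM (Id A a), LM d) \<in> F'" using F'_if_F'_inflation conflation_image[OF d] a by simp
  then show ?thesis using d unfolding inflation_def E'_def by blast
qed

lemma E'_deflation_comp:
  assumes "deflation A E' d" "deflation A E' d'" and c: "Cod A d = Dom A d'"
  shows "deflation A E' (Comp A d' d)"
proof -
  obtain i i' where e: "(i, d) \<in> E" "(LM i, LM d) \<in> F'" "(i', d') \<in> E" "(LM i', LM d') \<in> F'"
    using assms(1,2) unfolding deflation_def E'_def by blast
  have m: "d \<in> Mor A" "d' \<in> Mor A" using A.conflationD e by blast+
  obtain j where j: "(j, Comp A d' d) \<in> E" using A.deflation_comp[OF e(1,3) c] by blast
  obtain j' where "(j', Comp B (LM d') (LM d)) \<in> F'" using B'.deflation_comp[OF e(2,4)] m c by auto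
  then have "(LM j, LM (Comp A d' d)) \<in> F'" using F'_if_F'_deflation conflation_image[OF j] m c by simp
  then show ?thesis using j unfolding deflation_def E'_def by blast
qed

lemma E'_inflation_comp:
  assumes "inflation A E' i" "inflation A E' i'" and c: "Cod A i = Dom A i'"
  shows "inflation A E' (Comp A i' i)"
proof -
  obtain d d' where e: "(i, d) \<in> E" "(LM i, LM d) \<in> F'" "(i', d') \<in> E" "(LM i', LM d') \<in> F'"
    using assms(1,2) unfolding inflation_def E'_def by blast
  have m: "i \<in> Mor A" "i' \<in> Mor A" using A.conflationD e by blast+
  obtain j where j: "(Comp A i' i, j) \<in> E" using A.inflation_comp[OF e(1,3) c] by blast
  obtain j' where "(Comp B (LM i') (LM i), j') \<in> F'" using B'.inflation_comp[OF e(2,4)] m c by auto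
  then have "(LM (Comp A i' i), LM j) \<in> F'" using F'_if_F'_inflation conflation_image[OF j] m c by simp
  then show ?thesis using j unfolding inflation_def E'_def by blast
qed

lemma exact_category_E': "exact_category A E'"
proof -
  have "additive A" using A.exact unfolding exact_category_def by blast
  moreover have "\<forall>(i, d)\<in>E'. kc_pair A i d"
    using A.exact unfolding exact_category_def E'_def by blast
  moreover have "\<forall>(i, d)\<in>E'. \<forall>i' d' f g h.
      i' \<in> Mor A \<and> d' \<in> Mor A \<and> Cod A i' = Dom A d' \<and> iso A f \<and> iso A g \<and> iso A h \<and>
      f \<in> hom A (Dom A i) (Dom A i') \<and> g \<in> hom A (Cod A i) (Cod A i') \<and>
      h \<in> hom A (Cod A d) (Cod A d') \<and> Comp A i' f = Comp A g i \<and> Comp A d' g = Comp A h d \<longrightarrow>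
      (i', d') \<in> E'"
    using E'_iso_closed by blast
  ultimately show ?thesis
    unfolding exact_category_def
    using E'_deflation_id E'_inflation_id E'_deflation_comp E'_inflation_comp
      E'_inflation_pushout E'_deflation_pullback by blast
qed

end

theorem mainTheorem1:
  fixes A :: "('o, 'm) addcat" and E :: "('m \<times> 'm) set"
    and B :: "('p, 'n) addcat" and F F' :: "('n \<times> 'n) set"
    and LO :: "'o \<Rightarrow> 'p" and LM :: "'m \<Rightarrow> 'n"
  assumes "exact_category A E"
    and "exact_category B F"
    and "exact_functor A E B F LO LM"
    and "F' \<subseteq> F"
    and "exact_category B F'"
  shows "exact_category A {(i, d) \<in> E. (LM i, LM d) \<in> F'}"
proof -
  interpret exact_structure_restriction A E B F F' LO LM
    using assms by unfold_locales
  show ?thesis using exact_category_E' unfolding E'_def .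
qed

end
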